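(* Let $f:\mathbb{Z}^n\to\mathbb{R}\cup\{+\infty\}$ be an M-convex function. Let $y\in\operatorname{dom} f$ with $\phi(y)<0$, and let $i,j\in N$ be distinct with $f'(y;i,j)=\phi(y)$. Then $\phi(y+\chi_i-\chi_j)\ge\phi(y)$. Moreover, for all distinct $h,k\in N$ we have $f'(y+\chi_i-\chi_j;h,k)\ge\phi(y)$, and if equality holds then $f'(y+\chi_i-\chi_j;h,k)=\phi(y+\chi_i-\chi_j)$, i.e. $+\chi_h-\chi_k$ is a steepest descent direction at $y+\chi_i-\chi_j$.
   Context: $N=\{1,\dots,n\}$; $\chi_i\in\{0,1\}^n$ is the $i$-th unit vector. For $f:\mathbb{Z}^n\to\mathbb{R}\cup\{+\infty\}$, $\operatorname{dom} f=\{x\in\mathbb{Z}^n: f(x)<+\infty\}$. $f$ is M-convex if $\operatorname{dom} f\neq\emptyset$ and for all $x,y\in\operatorname{dom} f$ and every $i$ with $x(i)>y(i)$ there is $j$ with $x(j)<y(j)$ such that $f(x)+f(y)\ge f(x-\chi_i+\chi_j)+f(y+\chi_i-\chi_j)$. For $x\in\operatorname{dom} f$ and $i,j\in N$, $f'(x;i,j)=f(x+\chi_i-\chi_j)-f(x)$ (possibly $+\infty$; $f'(x;i,i)=0$), and $\phi(x)=\min_{i,j\in N}f'(x;i,j)$. A direction $+\chi_h-\chi_k$ is a steepest descent direction at $x$ if $f'(x;h,k)=\phi(x)$. *)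

theory Defs
  imports "HOL-Library.Extended_Real"
begin

text \<open>Ground set N is modelled by a finite type 'a; points of Z^N are functions 'a => int.
  Values in R \<union> {+\<infinity>} are modelled by ereal (never -\<infinity>, assumed separately).\<close>

definition chi :: "'a \<Rightarrow> 'a \<Rightarrow> int" where
  "chi i = (\<lambda>k. if k = i then 1 else 0)"

definition mdom :: "(('a \<Rightarrow> int) \<Rightarrow> ereal) \<Rightarrow> ('a \<Rightarrow> int) set" where
  "mdom f = {x. f x < \<infinity>}"

definition M_convex :: "(('a \<Rightarrow> int) \<Rightarrow> ereal) \<Rightarrow> bool" where
  "M_convex f \<longleftrightarrow> mdom f \<noteq> {} \<and>
     (\<forall>x\<in>mdom f. \<forall>y\<in>mdom f. \<forall>i. x i > y i \<longrightarrow>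
        (\<exists>j. x j < y j \<and>
           f x + f y \<ge> f (\<lambda>k. x k - chi i k + chi j k) + f (\<lambda>k. y k + chi i k - chi j k)))"

definition fder :: "(('a \<Rightarrow> int) \<Rightarrow> ereal) \<Rightarrow> ('a \<Rightarrow> int) \<Rightarrow> 'a \<Rightarrow> 'a \<Rightarrow> ereal" where
  "fder f x i j = f (\<lambda>k. x k + chi i k - chi j k) - f x"

definition phi :: "(('a::finite \<Rightarrow> int) \<Rightarrow> ereal) \<Rightarrow> ('a \<Rightarrow> int) \<Rightarrow> ereal" where
  "phi f x = Min {fder f x i j | i j. True}"

end

theory Submission
  imports Defs
begin

text \<open>Write \<open>x = y + \<chi>\<^sub>i - \<chi>\<^sub>j\<close> and \<open>z = x + \<chi>\<^sub>h - \<chi>\<^sub>k\<close>. It suffices to show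
  \<open>f z \<ge> f y + 2 \<phi>(y)\<close>, because \<open>f x = f y + \<phi>(y)\<close>. If \<open>h = j\<close> or \<open>k = i\<close>, then \<open>z\<close> is a
  single exchange step away from \<open>y\<close> and \<open>f z \<ge> f y + \<phi>(y)\<close>. Otherwise \<open>z(i) > y(i)\<close>, and the
  exchange axiom applied to \<open>z\<close>, \<open>y\<close> and \<open>i\<close> yields a \<open>j'\<close> with \<open>z(j') < y(j')\<close>, so
  \<open>j' \<in> {j, k}\<close>; both points produced by the exchange are then single steps away from \<open>y\<close>,
  whence \<open>f z + f y \<ge> 2 (f y + \<phi>(y))\<close>.\<close>

lemma fder_range_finite:
  fixes f :: "('a::finite \<Rightarrow> int) \<Rightarrow> ereal"
  shows "finite {fder f x i j | i j. True}"
proof -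
  have range: "{fder f x i j | i j. True} = (\<lambda>(i, j). fder f x i j) ` UNIV" by auto
  show ?thesis unfolding range by simp
qed

lemma phi_le_fder:
  fixes f :: "('a::finite \<Rightarrow> int) \<Rightarrow> ereal"
  shows "phi f x \<le> fder f x p q"
  unfolding phi_def by (rule Min_le[OF fder_range_finite]) auto

lemma phi_geI:
  fixes f :: "('a::finite \<Rightarrow> int) \<Rightarrow> ereal"
  assumes "\<And>p q. c \<le> fder f x p q"
  shows "c \<le> phi f x"
  unfolding phi_def using assms by (subst Min_ge_iff[OF fder_range_finite]) auto

lemma phi_attained:
  fixes f :: "('a::finite \<Rightarrow> int) \<Rightarrow> ereal"
  obtains p q where "phi f x = fder f x p q"
proof -
  have "phi f x \<in> {fder f x i j | i j. True}"
    unfolding phi_def by (rule Min_in[OF fder_range_finite]) auto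
  then show ?thesis using that by blast
qed

lemma fder_ge_iff:
  assumes "f x = ereal b"
  shows "ereal d \<le> fder f x p q \<longleftrightarrow> ereal (b + d) \<le> f (\<lambda>l. x l + chi p l - chi q l)"
  unfolding fder_def assms by (cases "f (\<lambda>l. x l + chi p l - chi q l)") auto

lemma phi_finite_nonpos:
  fixes f :: "('a::finite \<Rightarrow> int) \<Rightarrow> ereal"
  assumes "f x = ereal b" and "\<forall>z. f z \<noteq> -\<infinity>"
  obtains c where "phi f x = ereal c" and "c \<le> 0"
proof -
  obtain p q where "phi f x = fder f x p q" by (rule phi_attained)
  then have "phi f x \<noteq> -\<infinity>"
    using assms unfolding fder_def by (cases "f (\<lambda>l. x l + chi p l - chi q l)") auto
  moreover have "phi f x \<le> 0"
    using phi_le_fder[of f x p p] assms(1) by (simp add: fder_def chi_def)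
  ultimately show ?thesis
    using that by (cases "phi f x") auto
qed

lemma M_convex_two_steps_lower_bound:
  fixes f :: "('a \<Rightarrow> int) \<Rightarrow> ereal"
  assumes "M_convex f" and fy: "f y = ereal a"
    and one_step: "\<And>p q. ereal (a + c) \<le> f (\<lambda>l. y l + chi p l - chi q l)"
    and "c \<le> 0" and "i \<noteq> j"
  shows "ereal (a + 2 * c) \<le> f (\<lambda>l. y l + chi i l - chi j l + chi h l - chi k l)"
proof -
  define z where "z = (\<lambda>l. y l + chi i l - chi j l + chi h l - chi k l)"
  have weaker: "ereal (a + 2 * c) \<le> ereal (a + c)" using \<open>c \<le> 0\<close> by simp
  consider "h = j" | "k = i" | "h \<noteq> j" "k \<noteq> i" by blast
  then have "ereal (a + 2 * c) \<le> f z"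
  proof cases
    case 1
    then have "z = (\<lambda>l. y l + chi i l - chi k l)" by (auto simp: z_def chi_def)
    then show ?thesis by (simp add: order_trans[OF weaker one_step])
  next
    case 2
    then have "z = (\<lambda>l. y l + chi h l - chi j l)" by (auto simp: z_def chi_def)
    then show ?thesis by (simp add: order_trans[OF weaker one_step])
  next
    case 3
    show ?thesis
    proof (cases "z \<in> mdom f")
      case False
      then show ?thesis by (simp add: mdom_def)
    next
      case True
      have "y \<in> mdom f" using fy by (simp add: mdom_def)
      moreover have "z i > y i" using 3 \<open>i \<noteq> j\<close> by (simp add: z_def chi_def)
      ultimately obtain j' where "z j' < y j'"
        and exchange: "f (\<lambda>l. z l - chi i l + chi j' l) + f (\<lambda>l. y l + chi i l - chi j' l)
                         \<le> f z + f y"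
        using \<open>M_convex f\<close> True unfolding M_convex_def by blast
      then have "j' = j \<or> j' = k" by (auto simp: z_def chi_def split: if_splits)
      then have "ereal (a + c) \<le> f (\<lambda>l. z l - chi i l + chi j' l)"
      proof
        assume "j' = j"
        then have "(\<lambda>l. z l - chi i l + chi j' l) = (\<lambda>l. y l + chi h l - chi k l)"
          by (auto simp: z_def chi_def)
        then show ?thesis using one_step by simp
      next
        assume "j' = k"
        then have "(\<lambda>l. z l - chi i l + chi j' l) = (\<lambda>l. y l + chi h l - chi j l)"
          by (auto simp: z_def chi_def)
        then show ?thesis using one_step by simp
      qed
      then have "ereal (a + c) + ereal (a + c)
                   \<le> f (\<lambda>l. z l - chi i l + chi j' l) + f (\<lambda>l. y l + chi i l - chi j' l)"
        using one_step add_mono by blast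
      also note exchange
      finally have "ereal (a + c) + ereal (a + c) \<le> f z + ereal a" unfolding fy .
      then show ?thesis by (cases "f z") auto
    qed
  qed
  then show ?thesis unfolding z_def .
qed

lemma phi_le_fder_after_steepest_step:
  fixes f :: "('a::finite \<Rightarrow> int) \<Rightarrow> ereal"
  assumes "M_convex f" and "\<forall>z. f z \<noteq> -\<infinity>" and "y \<in> mdom f"
    and "i \<noteq> j" and steepest: "fder f y i j = phi f y"
  shows "phi f y \<le> fder f (\<lambda>l. y l + chi i l - chi j l) h k"
proof -
  define x where "x = (\<lambda>l. y l + chi i l - chi j l)"
  obtain a where fy: "f y = ereal a"
    using assms(2,3) unfolding mdom_def by (cases "f y") auto
  obtain c where phi_y: "phi f y = ereal c" and "c \<le> 0"
    using phi_finite_nonpos[OF fy assms(2)] .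
  have one_step: "ereal (a + c) \<le> f (\<lambda>l. y l + chi p l - chi q l)" for p q
    using phi_le_fder[of f y p q] unfolding phi_y fder_ge_iff[of f y, OF fy] .
  have "fder f y i j = ereal c" using steepest phi_y by simp
  then have fx: "f x = ereal (a + c)"
    unfolding x_def fder_def fy by (cases "f (\<lambda>l. y l + chi i l - chi j l)") auto
  have "ereal (a + 2 * c) \<le> f (\<lambda>l. y l + chi i l - chi j l + chi h l - chi k l)"
    by (rule M_convex_two_steps_lower_bound[OF assms(1) fy one_step \<open>c \<le> 0\<close> \<open>i \<noteq> j\<close>])
  moreover have "a + c + c = a + 2 * c" by simp
  ultimately have "ereal (a + c + c) \<le> f (\<lambda>l. x l + chi h l - chi k l)"
    unfolding x_def by (simp only:)
  then show ?thesis unfolding phi_y fder_ge_iff[of f x, OF fx] x_def[symmetric] .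
qed

theorem mainTheorem1:
  fixes f :: "('a::finite \<Rightarrow> int) \<Rightarrow> ereal" and y :: "'a \<Rightarrow> int" and i j :: 'a
  assumes "M_convex f"
    and "\<forall>x. f x \<noteq> -\<infinity>"
    and "y \<in> mdom f"
    and "phi f y < 0"
    and "i \<noteq> j"
    and "fder f y i j = phi f y"
  shows "phi f (\<lambda>k. y k + chi i k - chi j k) \<ge> phi f y \<and>
         (\<forall>h k. h \<noteq> k \<longrightarrow>
            fder f (\<lambda>l. y l + chi i l - chi j l) h k \<ge> phi f y \<and>
            (fder f (\<lambda>l. y l + chi i l - chi j l) h k = phi f y \<longrightarrow>
               fder f (\<lambda>l. y l + chi i l - chi j l) h k = phi f (\<lambda>l. y l + chi i l - chi j l)))"
proof -
  define x where "x = (\<lambda>l. y l + chi i l - chi j l)"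
  have fder_x: "phi f y \<le> fder f x h k" for h k
    unfolding x_def using phi_le_fder_after_steepest_step[OF assms(1-3,5-6)] .
  have phi_x: "phi f y \<le> phi f x" by (rule phi_geI) (rule fder_x)
  show ?thesis unfolding x_def[symmetric]
  proof (intro conjI allI impI)
    show "phi f y \<le> phi f x" by (fact phi_x)
    fix h k
    show "phi f y \<le> fder f x h k" by (fact fder_x)
    assume "fder f x h k = phi f y"
    then show "fder f x h k = phi f x"
      using phi_x phi_le_fder[of f x h k] by simp
  qed
qed

end
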